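(* Let $m\ge2$, $n$ be integers and $k$ an integer with $1\le k\le n^2-3n+2$, written $k=(n-1)q+r$ with $q\ge0$, $1\le r\le n-1$. Let $M_1=(\mu_{ij})$ be the $n\times n$ $0/1$ matrix with $\mu_{1,n-1}=\mu_{1,n}=1$, $\mu_{i,i-1}=1$ for $2\le i\le n$, all other entries $0$. Let $\mathbb{A}_0$ be the order $m$, dimension $n$ tensor with $(\mathbb{A}_0)_{ij\ldots j}=\mu_{ij}$ and all entries with $i_2,\ldots,i_m$ not all equal equal to $0$. Let $\mathbb{A}_k=(a^{(k)}_{i_1\ldots i_m})$ be the order $m$, dimension $n$ tensor with $a^{(k)}_{ij\ldots j}=\mu_{ij}$; $a^{(k)}_{ii_2\ldots i_m}=1$ whenever $i\in[n]\setminus\{r-q,\ldots,r,r+1\}\pmod n$ and the set of distinct values among $i_2,\ldots,i_m$ equals $\{r-q-1,r\}\pmod n$; and all other entries $0$. Then for every integer $t$ with $1\le t\le k$ and every $j\in\{1,2,\ldots,n-2\}\cup\{n\}$, $S_t(\mathbb{A}_k,j)=S_t(\mathbb{A}_0,j)$.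
   Context: For an integer $a$, $|a|_n$ is the least positive integer congruent to $a$ modulo $n$, and $\{a_1,\ldots,a_s\}\pmod n$ means $\{|a_1|_n,\ldots,|a_s|_n\}$. General product of dimension-$n$ tensors: for $\mathbb{A}$ of order $m\ge2$ and $\mathbb{B}$ of order $k\ge1$, $(\mathbb{A}\mathbb{B})_{i\alpha_1\ldots\alpha_{m-1}}=\sum_{i_2,\ldots,i_m=1}^n a_{ii_2\ldots i_m}b_{i_2\alpha_1}\cdots b_{i_m\alpha_{m-1}}$ ($\alpha_l\in[n]^{k-1}$); it is associative and $\mathbb{A}^k$ is the $k$-fold power. $(M(\mathbb{C}))_{ij}=c_{ij\ldots j}$ is the majorization matrix. For $j\in[n]$, $k\ge1$: $S_k(\mathbb{A},j)=\{u\in[n]\mid (M(\mathbb{A}^k))_{uj}>0\}$. *)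

theory Defs
  imports Complex_Main
begin

text \<open>A tensor of order p and dimension n is represented as a function from index lists
  (of length p, entries in {1..n}) to real numbers; values outside this domain are irrelevant.\<close>
type_synonym tensor = "nat list \<Rightarrow> real"

text \<open>General product of A (order m) and B (order p), dimension n:
  (AB)_{i alpha_1 ... alpha_{m-1}} = sum_{i_2..i_m} a_{i i_2..i_m} b_{i_2 alpha_1} ... b_{i_m alpha_{m-1}},
  where each alpha_l has length p-1.\<close>
definition tprod :: "nat \<Rightarrow> nat \<Rightarrow> nat \<Rightarrow> tensor \<Rightarrow> tensor \<Rightarrow> tensor" where
  "tprod n m p A B = (\<lambda>is. case is of [] \<Rightarrow> 0
     | i # rest \<Rightarrow>
        (\<Sum>js\<in>{js. length js = m - 1 \<and> set js \<subseteq> {1..n}}.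
           A (i # js) * (\<Prod>l<m - 1. B (js ! l # take (p - 1) (drop (l * (p - 1)) rest)))))"

text \<open>tpow n m A t is the t-th power A^t (t >= 1) of an order m tensor A, of order (m-1)^t + 1.\<close>
fun tpow :: "nat \<Rightarrow> nat \<Rightarrow> tensor \<Rightarrow> nat \<Rightarrow> tensor" where
  "tpow n m A 0 = (\<lambda>_. 0)"
| "tpow n m A (Suc 0) = A"
| "tpow n m A (Suc (Suc t)) = tprod n m ((m - 1) ^ Suc t + 1) A (tpow n m A (Suc t))"

definition majm :: "nat \<Rightarrow> tensor \<Rightarrow> nat \<Rightarrow> nat \<Rightarrow> real" where
  "majm p C i j = C (i # replicate (p - 1) j)"

definition Sset :: "nat \<Rightarrow> nat \<Rightarrow> tensor \<Rightarrow> nat \<Rightarrow> nat \<Rightarrow> nat set" where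
  "Sset n m A t j = {u \<in> {1..n}. majm ((m - 1) ^ t + 1) (tpow n m A t) u j > 0}"

definition modn :: "nat \<Rightarrow> int \<Rightarrow> int" where
  "modn n a = (if a mod int n = 0 then int n else a mod int n)"

definition mu :: "nat \<Rightarrow> nat \<Rightarrow> nat \<Rightarrow> real" where
  "mu n i j = (if (i = 1 \<and> (j = n - 1 \<or> j = n)) \<or> (2 \<le> i \<and> i \<le> n \<and> j = i - 1) then 1 else 0)"

definition A0 :: "nat \<Rightarrow> tensor" where
  "A0 n = (\<lambda>is. case is of [] \<Rightarrow> 0
     | i # js \<Rightarrow> if js \<noteq> [] \<and> (\<forall>x\<in>set js. x = hd js) then mu n i (hd js) else 0)"

definition Ak :: "nat \<Rightarrow> nat \<Rightarrow> nat \<Rightarrow> tensor" where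
  "Ak n q r = (\<lambda>is. case is of [] \<Rightarrow> 0
     | i # js \<Rightarrow>
        if js \<noteq> [] \<and> (\<forall>x\<in>set js. x = hd js) then mu n i (hd js)
        else if int i \<notin> modn n ` {int r - int q .. int r + 1}
                \<and> int ` set js = {modn n (int r - int q - 1), modn n (int r)} then 1
        else 0)"

end

(*
  Only the positivity pattern of the powers matters. For a nonnegative tensor,
  S_{t+1}(A, j) is the set of u with a_{u i_2 ... i_m} > 0 for some i_2, ..., i_m in
  S_t(A, j). For A_0 this is the set of predecessors under the Wielandt matrix M_1, and
  S_t(A_0, j) is a cyclic arc of (T - 1) div (n - 1) + 1 consecutive residues starting
  at T = j + t (reading j = n as 0); for t < k this arc has at most q + 2 elements.
  The extra entries of A_k can add a vertex u only when both r - q - 1 and r lie in the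
  arc and u lies outside the window {r - q, ..., r + 1}. The arc cannot run forward from
  r - q - 1 to r, since that needs T beyond the bound coming from t < k; so it runs from
  r around to r - q - 1, and the next arc then already contains every residue outside
  {r - q + 1, ..., r}, in particular u.
*)

theory Submission
  imports Defs
begin

section \<open>Positivity pattern of tensor powers\<close>

lemma sum_pos_iff_ex_pos:
  fixes f :: "'a \<Rightarrow> 'b::ordered_comm_monoid_add"
  assumes "finite S" "\<And>x. x \<in> S \<Longrightarrow> 0 \<le> f x"
  shows "0 < sum f S \<longleftrightarrow> (\<exists>x\<in>S. 0 < f x)"
  using assms by (auto simp: less_le sum_nonneg sum_nonneg_eq_0_iff)

lemma prod_pos_iff_all_pos:
  fixes f :: "'a \<Rightarrow> 'b::linordered_idom"
  assumes "finite S" "\<And>x. x \<in> S \<Longrightarrow> 0 \<le> f x"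
  shows "0 < prod f S \<longleftrightarrow> (\<forall>x\<in>S. 0 < f x)"
  using assms by (auto simp: less_le prod_nonneg)

lemma tpow_nonneg:
  assumes "\<And>xs. 0 \<le> A xs"
  shows "0 \<le> tpow n m A t xs"
  using assms
  by (induction n m A t arbitrary: xs rule: tpow.induct)
     (auto simp: tprod_def split: list.split intro!: sum_nonneg prod_nonneg mult_nonneg_nonneg)

lemma take_drop_replicate_block:
  assumes "l < k"
  shows "take P (drop (l * P) (replicate (k * P) x)) = replicate P x"
proof -
  have "P \<le> (k - l) * P"
    using assms by (simp add: Suc_leI)
  then show ?thesis by (simp add: min_def diff_mult_distrib)
qed

lemma majm_tpow_Suc:
  assumes "1 \<le> t"
  shows "majm ((m - 1) ^ Suc t + 1) (tpow n m A (Suc t)) u j =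
    (\<Sum>js | length js = m - 1 \<and> set js \<subseteq> {1..n}.
       A (u # js) * (\<Prod>l<m - 1. majm ((m - 1) ^ t + 1) (tpow n m A t) (js ! l) j))"
proof -
  obtain t' where "t = Suc t'" using assms by (cases t) auto
  then show ?thesis
    unfolding majm_def
    by (simp add: tprod_def take_drop_replicate_block del: take_replicate drop_replicate)
qed

lemma Sset_1: "Sset n m A 1 j = {u \<in> {1..n}. 0 < A (u # replicate (m - 1) j)}"
  by (simp add: Sset_def majm_def)

definition Sstep :: "nat \<Rightarrow> nat \<Rightarrow> tensor \<Rightarrow> nat set \<Rightarrow> nat set" where
  "Sstep n m A S = {u \<in> {1..n}. \<exists>js. length js = m - 1 \<and> set js \<subseteq> S \<and> 0 < A (u # js)}"

lemma Sset_Suc: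
  assumes A_nonneg: "\<And>xs. 0 \<le> A xs" and "1 \<le> t"
  shows "Sset n m A (Suc t) j = Sstep n m A (Sset n m A t j)"
proof -
  let ?M = "\<lambda>v. majm ((m - 1) ^ t + 1) (tpow n m A t) v j"
  define L where "L = {js. length js = m - 1 \<and> set js \<subseteq> {1..n}}"
  have "finite L"
    using finite_lists_length_eq[of "{1..n}" "m - 1"] by (simp add: L_def conj_commute)
  have M_nonneg: "0 \<le> ?M v" for v
    unfolding majm_def using A_nonneg by (rule tpow_nonneg)
  have prod_pos: "0 < (\<Prod>l<m - 1. ?M (js ! l)) \<longleftrightarrow> (\<forall>v\<in>set js. 0 < ?M v)"
    if "length js = m - 1" for js
  proof -
    have "0 < (\<Prod>l<m - 1. ?M (js ! l)) \<longleftrightarrow> (\<forall>l\<in>{..<m - 1}. 0 < ?M (js ! l))"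
      by (rule prod_pos_iff_all_pos) (simp_all only: finite_lessThan M_nonneg)
    with that show ?thesis by (auto simp: all_set_conv_all_nth)
  qed
  have factors_nonneg: "0 \<le> A (u # js)" "0 \<le> (\<Prod>l<m - 1. ?M (js ! l))" for u js
    by (rule A_nonneg, rule prod_nonneg, rule M_nonneg)
  have "0 < majm ((m - 1) ^ Suc t + 1) (tpow n m A (Suc t)) u j \<longleftrightarrow>
      (\<exists>js\<in>L. 0 < A (u # js) * (\<Prod>l<m - 1. ?M (js ! l)))" for u
    unfolding majm_tpow_Suc[OF \<open>1 \<le> t\<close>] L_def[symmetric]
    using \<open>finite L\<close> factors_nonneg by (intro sum_pos_iff_ex_pos) simp_all
  also have "\<dots> u \<longleftrightarrow> (\<exists>js\<in>L. 0 < A (u # js) \<and> (\<forall>v\<in>set js. 0 < ?M v))" for u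
    using factors_nonneg prod_pos by (auto simp: L_def zero_less_mult_iff dest: leD)
  finally show ?thesis
    unfolding Sstep_def Sset_def L_def by (auto simp: subset_iff)
qed

lemma Sset_eq_if_Sstep_eq:
  assumes "\<And>xs. 0 \<le> A xs" "\<And>xs. 0 \<le> B xs"
    and "Sset n m A 1 j = Sset n m B 1 j"
    and "\<And>t. 1 \<le> t \<Longrightarrow> t < k \<Longrightarrow>
      Sstep n m A (Sset n m B t j) = Sstep n m B (Sset n m B t j)"
    and "1 \<le> t" "t \<le> k"
  shows "Sset n m A t j = Sset n m B t j"
  using \<open>1 \<le> t\<close> \<open>t \<le> k\<close>
proof (induction t rule: nat_induct_at_least)
  case (Suc t)
  then show ?case
    using assms by (simp add: Sset_Suc)
qed (use assms in simp)

lemma Sstep_mono_tensor: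
  assumes "\<And>xs. 0 < A xs \<Longrightarrow> 0 < B xs"
  shows "Sstep n m A S \<subseteq> Sstep n m B S"
  using assms by (auto simp: Sstep_def)

lemma A0_nonneg: "0 \<le> A0 n xs"
  by (auto simp: A0_def mu_def split: list.split)

lemma Ak_nonneg: "0 \<le> Ak n q r xs"
  by (auto simp: Ak_def mu_def split: list.split)

lemma A0_pos_imp_Ak_pos: "0 < A0 n xs \<Longrightarrow> 0 < Ak n q r xs"
  unfolding A0_def Ak_def by (auto split: list.splits if_splits)

lemma A0_replicate: "2 \<le> m \<Longrightarrow> A0 n (u # replicate (m - 1) v) = mu n u v"
  by (cases "m - 1") (auto simp: A0_def)

lemma Ak_replicate: "2 \<le> m \<Longrightarrow> Ak n q r (u # replicate (m - 1) v) = mu n u v"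
  by (cases "m - 1") (auto simp: Ak_def)

lemma Sset_1_mu:
  assumes "2 \<le> m"
  shows "Sset n m (A0 n) 1 j = {u \<in> {1..n}. 0 < mu n u j}"
    and "Sset n m (Ak n q r) 1 j = {u \<in> {1..n}. 0 < mu n u j}"
  unfolding Sset_1 using A0_replicate [OF assms] Ak_replicate [OF assms] by simp_all

definition mu_preds :: "nat \<Rightarrow> nat set \<Rightarrow> nat set" where
  "mu_preds n S = {u \<in> {1..n}. \<exists>v\<in>S. 0 < mu n u v}"

lemma Sstep_A0:
  assumes "2 \<le> m"
  shows "Sstep n m (A0 n) S = mu_preds n S"
proof -
  have A0_pos: "0 < A0 n (u # js) \<longleftrightarrow> js \<noteq> [] \<and> set js = {hd js} \<and> 0 < mu n u (hd js)" for u js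
    by (cases js) (auto simp: A0_def)
  show ?thesis
  proof (intro set_eqI iffI)
    fix u assume "u \<in> Sstep n m (A0 n) S"
    then show "u \<in> mu_preds n S"
      using A0_pos by (fastforce simp: Sstep_def mu_preds_def)
  next
    fix u assume "u \<in> mu_preds n S"
    then obtain v where "u \<in> {1..n}" "v \<in> S" "0 < mu n u v"
      by (auto simp: mu_preds_def)
    then show "u \<in> Sstep n m (A0 n) S"
      unfolding Sstep_def using A0_replicate[OF assms]
      by (intro CollectI conjI exI[of _ "replicate (m - 1) v"]) auto
  qed
qed

lemma Sstep_Ak_subset:
  "Sstep n m (Ak n q r) S \<subseteq> Sstep n m (A0 n) S \<union>
     {u \<in> {1..n}. int u \<notin> modn n ` {int r - int q .. int r + 1} \<and>
        {modn n (int r - int q - 1), modn n (int r)} \<subseteq> int ` S}"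
proof
  fix u assume "u \<in> Sstep n m (Ak n q r) S"
  then obtain js where u: "u \<in> {1..n}" and js: "length js = m - 1" "set js \<subseteq> S"
    and pos: "0 < Ak n q r (u # js)"
    by (auto simp: Sstep_def)
  show "u \<in> Sstep n m (A0 n) S \<union> {u \<in> {1..n}. int u \<notin> modn n ` {int r - int q .. int r + 1} \<and>
        {modn n (int r - int q - 1), modn n (int r)} \<subseteq> int ` S}"
  proof (cases "js \<noteq> [] \<and> (\<forall>x\<in>set js. x = hd js)")
    case True
    then have "A0 n (u # js) = Ak n q r (u # js)"
      by (simp add: A0_def Ak_def)
    with u js pos show ?thesis
      by (auto simp: Sstep_def)
  next
    case False
    with pos have "int u \<notin> modn n ` {int r - int q .. int r + 1}"
      and "int ` set js = {modn n (int r - int q - 1), modn n (int r)}"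
      by (auto simp: Ak_def split: if_split_asm)
    with u js(2) show ?thesis
      by blast
  qed
qed

section \<open>Arcs of the Wielandt matrix\<close>

lemma mod_add_cases:
  fixes x p N :: int
  assumes "0 \<le> p" "p < N"
  shows "(x + p) mod N = x mod N + p \<or> (x + p) mod N = x mod N + p - N"
proof -
  have "(x + p) mod N = (x mod N + p) mod N"
    by (rule mod_add_left_eq [symmetric])
  moreover have "0 \<le> x mod N" "x mod N < N"
    using assms by simp_all
  moreover have "y mod N = y - N" if "N \<le> y" "y < 2 * N" for y
    using that mod_pos_pos_trivial [of "y - N" N] by simp
  ultimately show ?thesis
    using assms by (cases "x mod N + p < N") (simp_all add: mod_pos_pos_trivial)
qed

definition arc :: "nat \<Rightarrow> int \<Rightarrow> int \<Rightarrow> nat set" where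
  "arc n T G = {u \<in> {1..n}. (int u - T) mod int n \<le> G}"

(* u \<in> reach n T iff the entry (u, n) of M_1^T is positive. *)

definition reach :: "nat \<Rightarrow> int \<Rightarrow> nat set" where
  "reach n T = arc n T ((T - 1) div (int n - 1))"

lemma mu_pos_iff:
  "u \<in> {1..n} \<Longrightarrow> 0 < mu n u v \<longleftrightarrow> (if u = 1 then v = n - 1 \<or> v = n else v = u - 1)"
  by (auto simp: mu_def)

lemma mu_preds_arc:
  assumes "2 \<le> n"
  shows "mu_preds n (arc n T G) = arc n (T + 1) G \<union> {u. u = 1 \<and> n - 1 \<in> arc n T G}"
proof (rule set_eqI)
  fix u
  have shift: "u - 1 \<in> arc n T G \<longleftrightarrow> u \<in> arc n (T + 1) G" if "2 \<le> u" "u \<le> n"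
    using that by (auto simp: arc_def of_nat_diff algebra_simps)
  have wrap: "n \<in> arc n T G \<longleftrightarrow> 1 \<in> arc n (T + 1) G"
    using assms by (simp add: arc_def mod_diff_left_eq [of "int n", symmetric])
  have preds: "mu_preds n S =
      {u \<in> {2..n}. u - 1 \<in> S} \<union> {u. u = 1 \<and> (n - 1 \<in> S \<or> n \<in> S)}" for S
    using assms by (auto simp: mu_preds_def mu_pos_iff split: if_split_asm)
  consider "u = 1" | "2 \<le> u" "u \<le> n" | "u \<notin> {1..n}"
    by fastforce
  then show "u \<in> mu_preds n (arc n T G) \<longleftrightarrow> u \<in> arc n (T + 1) G \<union> {u. u = 1 \<and> n - 1 \<in> arc n T G}"
    by cases (use shift wrap preds in \<open>auto simp: arc_def\<close>)
qed

lemma mu_preds_arc_full: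
  assumes "2 \<le> n" "0 \<le> G" and T: "T = (int n - 1) * (G + 1)"
  shows "mu_preds n (arc n T G) = arc n (T + 1) (G + 1)"
proof -
  have "int (n - 1) - T = G + int n * - G"
    using assms by (simp add: of_nat_diff algebra_simps)
  then have "(int (n - 1) - T) mod int n = G mod int n"
    by (simp only: mod_mult_self2)
  then have "n - 1 \<in> arc n T G"
    using assms by (simp add: arc_def zmod_le_nonneg_dividend)
  moreover have "int 1 - (T + 1) = (G + 1) + int n * - (G + 1)"
    using T by (simp add: algebra_simps)
  then have "(int 1 - (T + 1)) mod int n = (G + 1) mod int n"
    by (simp only: mod_mult_self2)
  then have "1 \<in> arc n (T + 1) (G + 1)"
    using assms by (simp add: arc_def zmod_le_nonneg_dividend)
  moreover have "u = 1" if "u \<in> arc n (T + 1) (G + 1)" "u \<notin> arc n (T + 1) G" for u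
  proof -
    from that have u: "1 \<le> u" "u \<le> n" "(int u - (T + 1)) mod int n = G + 1"
      by (auto simp: arc_def)
    then have "int n dvd (int u - (T + 1)) - (G + 1)"
      by (metis mod_eq_dvd_iff mod_mod_trivial)
    moreover have "(int u - (T + 1)) - (G + 1) = (int u - 1) + int n * - (G + 1)"
      using T by (simp add: algebra_simps)
    ultimately have "int n dvd int u - 1"
      by (metis dvd_add_left_iff dvd_triv_left)
    with u show "u = 1"
      using zdvd_not_zless [of "int u - 1" "int n"] by fastforce
  qed
  moreover have "arc n (T + 1) G \<subseteq> arc n (T + 1) (G + 1)"
    by (auto simp: arc_def)
  ultimately show ?thesis
    using mu_preds_arc [OF \<open>2 \<le> n\<close>] by blast
qed

lemma mu_preds_arc_partial:
  assumes "2 \<le> n" and T: "T = (int n - 1) * G + s" and s: "1 \<le> s" "s \<le> int n - 2"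
  shows "mu_preds n (arc n T G) = arc n (T + 1) G"
proof -
  have "1 \<in> arc n (T + 1) G" if "n - 1 \<in> arc n T G"
  proof -
    define x where "x = (-1 - T) mod int n"
    have "int (n - 1) - T = int n + (-1 - T)"
      using assms by (simp add: of_nat_diff)
    then have "(int (n - 1) - T) mod int n = x"
      unfolding x_def by (simp only: mod_add_self1)
    moreover from that have "(int (n - 1) - T) mod int n \<le> G"
      unfolding arc_def by blast
    ultimately have "x \<le> G"
      by simp
    moreover have "x \<noteq> G"
    proof
      assume "x = G"
      then have "int n dvd (-1 - T) - G"
        unfolding x_def by (metis mod_eq_dvd_iff mod_mod_trivial)
      moreover have "(-1 - T) - G = - (s + 1) + int n * - G"
        using T by (simp add: algebra_simps)
      ultimately have "int n dvd s + 1"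
        by (metis dvd_add_left_iff dvd_minus_iff dvd_triv_left)
      with s show False
        using zdvd_not_zless [of "s + 1" "int n"] by simp
    qed
    moreover have "(-1 - T + 1) mod int n \<le> x + 1"
      using mod_add_cases [of 1 "int n" "-1 - T"] assms unfolding x_def by linarith
    ultimately show ?thesis
      using assms by (simp add: arc_def)
  qed
  then show ?thesis
    using mu_preds_arc [OF \<open>2 \<le> n\<close>] by blast
qed

lemma mu_preds_reach:
  assumes "2 \<le> n" "1 \<le> T"
  shows "mu_preds n (reach n T) = reach n (T + 1)"
proof -
  define G where "G = (T - 1) div (int n - 1)"
  define s where "s = (T - 1) mod (int n - 1) + 1"
  have T: "T = (int n - 1) * G + s"
    unfolding G_def s_def by simp
  have "0 < int n - 1"
    using assms by simp
  then have "0 \<le> (T - 1) mod (int n - 1)" "(T - 1) mod (int n - 1) < int n - 1"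
    and "0 \<le> G"
    using \<open>1 \<le> T\<close> by (simp_all add: G_def pos_imp_zdiv_nonneg_iff)
  then have s: "1 \<le> s" "s \<le> int n - 1"
    unfolding s_def by linarith+
  show ?thesis
  proof (cases "s = int n - 1")
    case True
    with T have T': "T = (int n - 1) * (G + 1)"
      by (simp add: algebra_simps)
    then have "(T + 1 - 1) div (int n - 1) = G + 1"
      using assms by simp
    then show ?thesis
      unfolding reach_def G_def [symmetric] using mu_preds_arc_full [OF \<open>2 \<le> n\<close> \<open>0 \<le> G\<close> T'] by simp
  next
    case False
    with T s have "(T + 1 - 1) div (int n - 1) = G"
      by (simp add: div_add_self1)
    then show ?thesis
      unfolding reach_def G_def [symmetric] using mu_preds_arc_partial [OF \<open>2 \<le> n\<close> T] s False by simp
  qed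
qed

lemma reach_singleton:
  assumes "1 \<le> T" "T \<le> int n - 1"
  shows "reach n T = {nat T}"
proof -
  have "(T - 1) div (int n - 1) = 0"
    using assms by (simp add: div_pos_pos_trivial)
  moreover have "u = nat T" if "u \<in> {1..n}" "(int u - T) mod int n \<le> 0" for u
  proof -
    have "0 \<le> (int u - T) mod int n"
      using assms by simp
    with that have "(int u - T) mod int n = 0"
      by simp
    then have "int n dvd int u - T"
      by (simp add: mod_eq_0_iff_dvd)
    with that assms have "int u = T"
      using dvd_imp_le_int [of "int u - T" "int n"] by fastforce
    then show ?thesis
      by simp
  qed
  ultimately show ?thesis
    using assms by (auto simp: reach_def arc_def)
qed

lemma mu_column:
  assumes "1 \<le> n" "j \<in> {1..n - 2} \<union> {n}"
  shows "{u \<in> {1..n}. 0 < mu n u j} = {j mod n + 1}"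
  using assms by (auto simp: mu_def)

lemma Sset_A0:
  assumes "2 \<le> m" "2 \<le> n" "j \<in> {1..n - 2} \<union> {n}" "1 \<le> t"
  shows "Sset n m (A0 n) t j = reach n (int (j mod n + t))"
  using \<open>1 \<le> t\<close>
proof (induction t rule: nat_induct_at_least)
  case base
  have "j mod n + 1 \<le> n - 1"
    using assms by auto
  then have "reach n (int (j mod n + 1)) = {j mod n + 1}"
    using reach_singleton [of "int (j mod n + 1)" n] by simp
  then show ?case
    using assms Sset_1_mu(1) [of m n j] mu_column [of n j] by simp
next
  case (Suc t)
  then show ?case
    using assms by (simp add: Sset_Suc A0_nonneg Sstep_A0 mu_preds_reach add_ac)
qed

section \<open>The extra entries of Ak\<close>

lemma window_start_offset_ne_0:
  fixes N q r T :: int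
  assumes "r \<le> N - 1" "(N - 1) * (q + 1) < T" "T \<le> (N - 1) * (q + 1) + r - 2"
  shows "(r - q - 1 - T) mod N \<noteq> 0"
proof
  define s where "s = T - (N - 1) * (q + 1)"
  assume "(r - q - 1 - T) mod N = 0"
  then have "N dvd (r - q - 1 - T) + N * (q + 1)"
    by (simp add: mod_eq_0_iff_dvd)
  moreover have "(r - q - 1 - T) + N * (q + 1) = r - s"
    by (simp add: s_def algebra_simps)
  moreover have "\<not> N dvd r - s"
    using assms by (intro zdvd_not_zless) (simp_all add: s_def)
  ultimately show False
    by simp
qed

lemma offset_outside_wrapped_window:
  fixes N q r T u :: int
  assumes "0 \<le> q" "q < N"
    and wrap: "(r - q - 1 - T) mod N = (r - T) mod N + N - q - 1"
    and u: "\<forall>z\<in>{r - q..r}. z mod N \<noteq> u mod N"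
  shows "(u - 1 - T) mod N < (r - q - 1 - T) mod N"
proof -
  define d where "d = (u - r - 1) mod N"
  have "0 \<le> d" "d < N"
    using assms by (simp_all add: d_def)
  have "d \<le> N - q - 2"
  proof (rule ccontr)
    assume "\<not> d \<le> N - q - 2"
    with \<open>d < N\<close> have "r + 1 + d - N \<in> {r - q..r}"
      by simp
    moreover have "(r + 1 + d - N) mod N = u mod N"
      unfolding d_def by (simp add: mod_simps)
    ultimately show False
      using u by blast
  qed
  have "(d + (r - T) mod N) mod N = (u - r - 1 + (r - T)) mod N"
    unfolding d_def by (rule mod_add_eq)
  then have "(u - 1 - T) mod N = (d + (r - T) mod N) mod N"
    by (simp add: algebra_simps)
  moreover have "0 \<le> (r - T) mod N" "(r - q - 1 - T) mod N < N"
    using \<open>0 \<le> q\<close> \<open>q < N\<close> by simp_all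
  ultimately have "(u - 1 - T) mod N = d + (r - T) mod N"
    using \<open>0 \<le> d\<close> \<open>d \<le> N - q - 2\<close> wrap by (simp add: mod_pos_pos_trivial)
  then show ?thesis
    using \<open>d \<le> N - q - 2\<close> wrap by linarith
qed

lemma offset_outside_window:
  fixes N q r T u :: int
  assumes q: "0 \<le> q" "q + 3 \<le> N" and r: "r \<le> N - 1"
    and T: "1 \<le> T" "T \<le> (N - 1) * q + r + N - 3"
    and A: "(r - q - 1 - T) mod N \<le> (T - 1) div (N - 1)"
    and B: "(r - T) mod N \<le> (T - 1) div (N - 1)"
    and u: "\<forall>z\<in>{r - q..r}. z mod N \<noteq> u mod N"
  shows "(u - 1 - T) mod N \<le> (T - 1) div (N - 1)"
proof -
  define G where "G = (T - 1) div (N - 1)"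
  have T_div: "T - 1 = (N - 1) * G + (T - 1) mod (N - 1)"
    unfolding G_def by simp
  moreover have "0 \<le> (T - 1) mod (N - 1)" "(T - 1) mod (N - 1) < N - 1"
    using q by simp_all
  ultimately have "(N - 1) * G < (N - 1) * (q + 2)"
    using T r by (simp add: algebra_simps)
  then have G_le: "G \<le> q + 1"
    using q by (simp add: mult_less_cancel_left)
  define a where "a = (r - q - 1 - T) mod N"
  have "0 \<le> a"
    using q by (simp add: a_def)
  have "(r - T) mod N = a + (q + 1) \<or> (r - T) mod N = a + (q + 1) - N"
    using mod_add_cases [of "q + 1" N "r - q - 1 - T"] q by (simp add: a_def)
  then show ?thesis
  proof
    assume "(r - T) mod N = a + (q + 1)"
    then have "a = 0" "G = q + 1"
      using B G_le \<open>0 \<le> a\<close> unfolding G_def by linarith+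
    moreover have "(N - 1) * (q + 1) < T"
      using T_div [unfolded \<open>G = q + 1\<close>] \<open>0 \<le> (T - 1) mod (N - 1)\<close> by linarith
    ultimately show ?thesis
      using window_start_offset_ne_0 [of r N q T] T(2) r by (simp add: a_def algebra_simps)
  next
    assume "(r - T) mod N = a + (q + 1) - N"
    then have "(u - 1 - T) mod N < a"
      using offset_outside_wrapped_window [of q N r T u] q u by (simp add: a_def)
    then show ?thesis
      using A by (simp add: a_def)
  qed
qed

lemma modn_in_int_arc:
  assumes "0 < n"
  shows "modn n z \<in> int ` arc n T G \<longleftrightarrow> (z - T) mod int n \<le> G"
proof -
  define v where "v = nat (modn n z)"
  have "0 \<le> z mod int n" "z mod int n < int n"
    using assms by simp_all
  then have v: "v \<in> {1..n}" "int v = modn n z" "int v mod int n = z mod int n"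
    by (auto simp: v_def modn_def)
  then have "(int v - T) mod int n = (z - T) mod int n"
    by (metis mod_diff_left_eq)
  moreover have "modn n z \<in> int ` arc n T G \<longleftrightarrow> v \<in> arc n T G"
    using v(2) by (metis image_iff of_nat_eq_iff)
  ultimately show ?thesis
    using v(1) by (simp add: arc_def)
qed

lemma modn_eq_int_iff:
  assumes "u \<in> {1..n}"
  shows "modn n z = int u \<longleftrightarrow> z mod int n = int u mod int n"
proof (cases "u = n")
  case True
  have "z mod int n \<noteq> int n"
    using assms by (simp add: less_imp_neq)
  with True show ?thesis
    by (simp add: modn_def)
next
  case False
  with assms show ?thesis
    by (simp add: modn_def)
qed

lemma reach_Suc_outside_window:
  assumes "int q + 3 \<le> int n" "r \<le> n - 1"
    and T: "1 \<le> T" "T \<le> (int n - 1) * int q + int r + int n - 3"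
    and window_ends: "{modn n (int r - int q - 1), modn n (int r)} \<subseteq> int ` reach n T"
    and u: "u \<in> {1..n}" "int u \<notin> modn n ` {int r - int q .. int r + 1}"
  shows "u \<in> reach n (T + 1)"
proof -
  have "0 < n"
    using assms by simp
  have outside: "\<forall>z\<in>{int r - int q..int r}. z mod int n \<noteq> int u mod int n"
  proof
    fix z assume "z \<in> {int r - int q..int r}"
    then have "modn n z \<in> modn n ` {int r - int q .. int r + 1}"
      by simp
    with u(2) have "modn n z \<noteq> int u"
      by auto
    then show "z mod int n \<noteq> int u mod int n"
      using modn_eq_int_iff [OF u(1)] by simp
  qed
  have "int r \<le> int n - 1"
    using assms by linarith
  moreover have "(int r - int q - 1 - T) mod int n \<le> (T - 1) div (int n - 1)"
    and "(int r - T) mod int n \<le> (T - 1) div (int n - 1)"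
    using window_ends modn_in_int_arc [OF \<open>0 < n\<close>] by (simp_all add: reach_def)
  ultimately have "(int u - 1 - T) mod int n \<le> (T - 1) div (int n - 1)"
    using offset_outside_window [OF of_nat_0_le_iff assms(1) _ T] outside by blast
  also have "\<dots> \<le> T div (int n - 1)"
    using assms by (simp add: zdiv_mono1)
  finally show ?thesis
    using u by (simp add: reach_def arc_def algebra_simps)
qed

lemma Sstep_Ak_reach:
  assumes "2 \<le> m" "int q + 3 \<le> int n" "r \<le> n - 1"
    and "1 \<le> T" "T \<le> (int n - 1) * int q + int r + int n - 3"
  shows "Sstep n m (Ak n q r) (reach n T) = reach n (T + 1)"
proof
  have "2 \<le> n"
    using assms(2) by linarith
  then have A0_step: "Sstep n m (A0 n) (reach n T) = reach n (T + 1)"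
    using Sstep_A0 [OF \<open>2 \<le> m\<close>] mu_preds_reach [OF _ \<open>1 \<le> T\<close>] by simp
  show "Sstep n m (Ak n q r) (reach n T) \<subseteq> reach n (T + 1)"
  proof
    fix u assume "u \<in> Sstep n m (Ak n q r) (reach n T)"
    then consider "u \<in> Sstep n m (A0 n) (reach n T)"
      | "u \<in> {1..n}" "int u \<notin> modn n ` {int r - int q .. int r + 1}"
        "{modn n (int r - int q - 1), modn n (int r)} \<subseteq> int ` reach n T"
      using Sstep_Ak_subset by blast
    then show "u \<in> reach n (T + 1)"
      by cases (use A0_step reach_Suc_outside_window [OF assms(2-5)] in auto)
  qed
  show "reach n (T + 1) \<subseteq> Sstep n m (Ak n q r) (reach n T)"
    using A0_step Sstep_mono_tensor [of "A0 n" "Ak n q r", OF A0_pos_imp_Ak_pos] by blast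
qed

theorem proposition3p2:
  fixes m n k q r :: nat
  assumes "m \<ge> 2"
    and "1 \<le> k" and "int k \<le> int n ^ 2 - 3 * int n + 2"
    and "k = (n - 1) * q + r" and "1 \<le> r" and "r \<le> n - 1"
  shows "\<forall>t j. 1 \<le> t \<and> t \<le> k \<and> j \<in> {1..n-2} \<union> {n} \<longrightarrow>
           Sset n m (Ak n q r) t j = Sset n m (A0 n) t j"
proof (intro allI impI, elim conjE)
  fix t j assume t: "1 \<le> t" "t \<le> k" and j: "j \<in> {1..n-2} \<union> {n}"
  have k: "int k = (int n - 1) * int q + int r"
    using assms(4-6) by (simp add: of_nat_diff)
  have "(int n - 1) * int q < (int n - 1) * (int n - 2)"
    using assms(3,5) k by (simp add: power2_eq_square algebra_simps)
  then have "int q < int n - 2"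
    using assms(5,6) by (simp add: mult_less_cancel_left_pos)
  then have n: "2 \<le> n" "int q + 3 \<le> int n"
    by linarith+
  show "Sset n m (Ak n q r) t j = Sset n m (A0 n) t j"
  proof (rule Sset_eq_if_Sstep_eq [OF Ak_nonneg A0_nonneg _ _ t])
    show "Sset n m (Ak n q r) 1 j = Sset n m (A0 n) 1 j"
      using Sset_1_mu [OF assms(1)] by simp
  next
    fix s assume s: "1 \<le> s" "s < k"
    define T where "T = int (j mod n + s)"
    have "Sset n m (A0 n) s j = reach n T"
      unfolding T_def using Sset_A0 assms(1) n(1) j s(1) .
    moreover have "j mod n \<le> n - 2"
      using j n by auto
    then have "1 \<le> T" "T \<le> (int n - 1) * int q + int r + int n - 3"
      using s k n unfolding T_def by linarith+
    ultimately show "Sstep n m (Ak n q r) (Sset n m (A0 n) s j) =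
        Sstep n m (A0 n) (Sset n m (A0 n) s j)"
      using assms(1,6) n by (simp add: Sstep_Ak_reach Sstep_A0 mu_preds_reach)
  qed
qed

end
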